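(* Let the distinct values $v_{j,k}$ ($1\le j\le s$, $1\le k\le m_j$) be partitioned into classes $[v_{j,1},\dots,v_{j,m_j}]$, and let $X_1,\dots,X_n$ be finite domain variables. Introduce variables $Y_1,\dots,Y_{n+1}$ whose values are $s$-tuples of integers (with $Y_i[j]\in\{0,\dots,m_j\}$), with $Y_1=(0,\dots,0)$, and for each $1\le i\le n$ the ternary constraint $E(X_i,Y_i,Y_{i+1})$ which holds iff for every $1\le j\le s$: $X_i\neq v_{j,k}$ for all $k>Y_i[j]+1$, and $Y_{i+1}[j]=Y_i[j]+1$ if $X_i=v_{j,Y_i[j]+1}$, and $Y_{i+1}[j]=Y_i[j]$ otherwise. Then (a) an assignment to $X_1,\dots,X_n$ satisfies $\mathrm{Precedence}([[v_{1,1},\dots,v_{1,m_1}],\dots,[v_{s,1},\dots,v_{s,m_s}]],[X_1,\dots,X_n])$ iff it extends to an assignment of the $Y_i$ with $Y_1=(0,\dots,0)$ satisfying all $E(X_i,Y_i,Y_{i+1})$; and (b) if $D(Y_1)=\{(0,\dots,0)\}$ and each $E(X_i,Y_i,Y_{i+1})$ is GAC (with all domains nonempty), then this Precedence constraint is GAC on the domains of $X_1,\dots,X_n$.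
   Context: A support of a constraint is an assignment of a value from its domain to each of its variables that satisfies it; a constraint is GAC iff every value in every variable's domain belongs to some support. For distinct values $a,b$, $\mathrm{Precedence}([a,b],[X_1,\dots,X_n])$ holds iff $\min\{i \mid X_i=a \text{ or } i=n+1\} < \min\{i \mid X_i=b \text{ or } i=n+2\}$. $\mathrm{Precedence}([[v_{1,1},\dots,v_{1,m_1}],\dots,[v_{s,1},\dots,v_{s,m_s}]],[X_1,\dots,X_n])$ holds iff $\mathrm{Precedence}([v_{j,k},v_{j,k+1}],[X_1,\dots,X_n])$ holds for all $1\le j\le s$, $1\le k<m_j$. *)

theory Defs
  imports Main
begin

text \<open>Positions are 0-based: list position i corresponds to the paper's index i+1.
  The value classes [v_{j,1},...,v_{j,m_j}] are the lists vs!j (j < s = length vs),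
  so v_{j,k} = (vs ! (j-1)) ! (k-1).\<close>

text \<open>Precedence([a,b],[X_1..X_n]): first position of a (or n+1) is smaller than
  first position of b (or n+2).  0-based: fallbacks are n and n+1.\<close>
definition prec_pair :: "'a \<Rightarrow> 'a \<Rightarrow> 'a list \<Rightarrow> bool" where
  "prec_pair a b xs \<longleftrightarrow>
     (LEAST i. (i < length xs \<and> xs ! i = a) \<or> i = length xs)
       < (LEAST i. (i < length xs \<and> xs ! i = b) \<or> i = Suc (length xs))"

definition precedence :: "'a list list \<Rightarrow> 'a list \<Rightarrow> bool" where
  "precedence vs xs \<longleftrightarrow>
     (\<forall>j < length vs. \<forall>k. Suc k < length (vs ! j) \<longrightarrow>
        prec_pair (vs ! j ! k) (vs ! j ! Suc k) xs)"

definition Ytuples :: "'a list list \<Rightarrow> nat list set" where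
  "Ytuples vs = {y. length y = length vs \<and> (\<forall>j < length vs. y ! j \<le> length (vs ! j))}"

text \<open>Paper: X_i differs from v_{j,k}
  for all k > Y_i[j]+1 (1-based k), i.e. from (vs!j)!k for 0-based k \<ge> Y_i[j]+1;
  Y_{i+1}[j] = Y_i[j]+1 if X_i = v_{j,Y_i[j]+1} = (vs!j)!(Y_i[j]), else Y_i[j].\<close>
definition E_con :: "'a list list \<Rightarrow> 'a \<Rightarrow> nat list \<Rightarrow> nat list \<Rightarrow> bool" where
  "E_con vs x y y' \<longleftrightarrow>
     (\<forall>j < length vs.
        (\<forall>k. Suc (y ! j) \<le> k \<and> k < length (vs ! j) \<longrightarrow> x \<noteq> vs ! j ! k) \<and>
        y' ! j = (if y ! j < length (vs ! j) \<and> x = vs ! j ! (y ! j)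
                  then Suc (y ! j) else y ! j))"

definition GAC :: "('a list \<Rightarrow> bool) \<Rightarrow> 'a set list \<Rightarrow> bool" where
  "GAC C Ds \<longleftrightarrow>
     (\<forall>i < length Ds. \<forall>d \<in> Ds ! i. \<exists>t. length t = length Ds \<and>
        (\<forall>k < length Ds. t ! k \<in> Ds ! k) \<and> t ! i = d \<and> C t)"

definition GAC3 :: "('a \<Rightarrow> 'b \<Rightarrow> 'c \<Rightarrow> bool) \<Rightarrow> 'a set \<Rightarrow> 'b set \<Rightarrow> 'c set \<Rightarrow> bool" where
  "GAC3 C D1 D2 D3 \<longleftrightarrow>
     (\<forall>a \<in> D1. \<exists>b \<in> D2. \<exists>c \<in> D3. C a b c) \<and>
     (\<forall>b \<in> D2. \<exists>a \<in> D1. \<exists>c \<in> D3. C a b c) \<and>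
     (\<forall>c \<in> D3. \<exists>a \<in> D1. \<exists>b \<in> D2. C a b c)"

end

theory Submission
  imports Defs
begin

(* Proof idea.
   (a) For distinct a, b, Precedence([a,b],X) says that every occurrence of b is preceded
   by an occurrence of a.  Hence a sequence satisfies the Precedence constraint iff every
   value x at position i is "allowed" after the prefix before it: if x is the (k+1)-st
   value of its class, the k-th one already occurs in that prefix.  The constraint E is a
   deterministic transition: Y_{i+1} is the function next_state of X_i and Y_i, and E
   additionally demands that state_admits X_i Y_i.  Along a prefix that satisfies
   Precedence, the state reached from (0,...,0) records, per class j, exactly how many
   values of class j have been seen; for such a state, "admits" coincides with "allowed".
   Thus the unique run of E from (0,...,0) exists iff the sequence satisfies Precedence.
   (b) For an arbitrary chain of GAC ternary constraints C(X_i,Y_i,Y_{i+1}) every value of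
   every domain lies on a complete path of supports (extend backward and forward from a
   support of the single constraint).  Such a path is a solution of the E-decomposition,
   so by (a) it is a support of Precedence. *)

section \<open>Precedence as a condition on prefixes\<close>

lemma prec_pair_iff:
  assumes "a \<noteq> b"
  shows "prec_pair a b xs \<longleftrightarrow> (\<forall>i<length xs. xs ! i = b \<longrightarrow> a \<in> set (take i xs))"
proof -
  define A where "A = (LEAST i. (i < length xs \<and> xs ! i = a) \<or> i = length xs)"
  define B where "B = (LEAST i. (i < length xs \<and> xs ! i = b) \<or> i = Suc (length xs))"
  have A1: "(A < length xs \<and> xs ! A = a) \<or> A = length xs"
    unfolding A_def by (rule LeastI[of _ "length xs"]) simp
  have A2: "A \<le> i" if "i < length xs" "xs ! i = a" for i
    unfolding A_def using that by (intro Least_le) simp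
  have B1: "(B < length xs \<and> xs ! B = b) \<or> B = Suc (length xs)"
    unfolding B_def by (rule LeastI[of _ "Suc (length xs)"]) simp
  have B2: "B \<le> i" if "i < length xs" "xs ! i = b" for i
    unfolding B_def using that by (intro Least_le) simp
  have "prec_pair a b xs \<longleftrightarrow> A < B"
    unfolding prec_pair_def A_def B_def ..
  also have "\<dots> \<longleftrightarrow> (\<forall>i<length xs. xs ! i = b \<longrightarrow> (\<exists>i'<i. xs ! i' = a))"
  proof
    assume "A < B"
    show "\<forall>i<length xs. xs ! i = b \<longrightarrow> (\<exists>i'<i. xs ! i' = a)"
    proof (intro allI impI)
      fix i assume "i < length xs" "xs ! i = b"
      then have "B \<le> i" by (rule B2)
      then have "A < i" using \<open>A < B\<close> by simp
      then show "\<exists>i'<i. xs ! i' = a" using A1 \<open>i < length xs\<close> by auto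
    qed
  next
    assume H: "\<forall>i<length xs. xs ! i = b \<longrightarrow> (\<exists>i'<i. xs ! i' = a)"
    show "A < B"
    proof (cases "B = Suc (length xs)")
      case True
      then show ?thesis using A1 by auto
    next
      case False
      then have "B < length xs" "xs ! B = b" using B1 by auto
      then obtain i' where "i' < B" "xs ! i' = a" using H by blast
      then show ?thesis using A2[of i'] \<open>B < length xs\<close> by auto
    qed
  qed
  also have "\<dots> \<longleftrightarrow> (\<forall>i<length xs. xs ! i = b \<longrightarrow> a \<in> set (take i xs))"
  proof -
    have "a \<in> set (take i xs) \<longleftrightarrow> (\<exists>i'<i. xs ! i' = a)" if "i < length xs" for i
      using that by (auto simp: in_set_conv_nth)
    then show ?thesis by blast
  qed
  finally show ?thesis .
qed

definition allowed :: "'a list list \<Rightarrow> 'a list \<Rightarrow> 'a \<Rightarrow> bool" where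
  "allowed vs p x \<longleftrightarrow>
     (\<forall>j<length vs. \<forall>k. Suc k < length (vs ! j) \<and> x = vs ! j ! Suc k \<longrightarrow> vs ! j ! k \<in> set p)"

lemma distinct_class:
  "distinct (concat vs) \<Longrightarrow> j < length vs \<Longrightarrow> distinct (vs ! j)"
  by (metis distinct_concat_iff nth_mem)

lemma precedence_iff_allowed:
  assumes "distinct (concat vs)"
  shows "precedence vs xs \<longleftrightarrow> (\<forall>i<length xs. allowed vs (take i xs) (xs ! i))"
proof -
  have pair: "prec_pair (vs ! j ! k) (vs ! j ! Suc k) xs \<longleftrightarrow>
      (\<forall>i<length xs. xs ! i = vs ! j ! Suc k \<longrightarrow> vs ! j ! k \<in> set (take i xs))"
    if "j < length vs" "Suc k < length (vs ! j)" for j k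
  proof (rule prec_pair_iff)
    show "vs ! j ! k \<noteq> vs ! j ! Suc k"
      using distinct_class[OF assms that(1)] that(2) by (simp add: nth_eq_iff_index_eq)
  qed
  have "precedence vs xs \<longleftrightarrow> (\<forall>j<length vs. \<forall>k. Suc k < length (vs ! j) \<longrightarrow>
      (\<forall>i<length xs. xs ! i = vs ! j ! Suc k \<longrightarrow> vs ! j ! k \<in> set (take i xs)))"
    unfolding precedence_def using pair by blast
  also have "\<dots> \<longleftrightarrow> (\<forall>i<length xs. allowed vs (take i xs) (xs ! i))"
    unfolding allowed_def by blast
  finally show ?thesis .
qed

lemma precedence_snoc:
  assumes "distinct (concat vs)"
  shows "precedence vs (p @ [x]) \<longleftrightarrow> precedence vs p \<and> allowed vs p x"
  using assms by (auto simp: precedence_iff_allowed less_Suc_eq nth_append)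

lemma precedence_Nil: "distinct (concat vs) \<Longrightarrow> precedence vs []"
  by (simp add: precedence_iff_allowed)

lemma precedence_take:
  "distinct (concat vs) \<Longrightarrow> precedence vs xs \<Longrightarrow> precedence vs (take i xs)"
  by (simp add: precedence_iff_allowed min_less_iff_conj)

section \<open>The constraint E as a deterministic transition\<close>

definition next_state :: "'a list list \<Rightarrow> 'a \<Rightarrow> nat list \<Rightarrow> nat list" where
  "next_state vs x y =
     map (\<lambda>j. if y ! j < length (vs ! j) \<and> x = vs ! j ! (y ! j) then Suc (y ! j) else y ! j)
         [0..<length vs]"

definition state_admits :: "'a list list \<Rightarrow> 'a \<Rightarrow> nat list \<Rightarrow> bool" where
  "state_admits vs x y \<longleftrightarrow>
     (\<forall>j<length vs. \<forall>k. Suc (y ! j) \<le> k \<and> k < length (vs ! j) \<longrightarrow> x \<noteq> vs ! j ! k)"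

definition state_of :: "'a list list \<Rightarrow> 'a list \<Rightarrow> nat list" where
  "state_of vs p = foldl (\<lambda>y x. next_state vs x y) (replicate (length vs) 0) p"

lemma next_state_nth:
  "j < length vs \<Longrightarrow>
   next_state vs x y ! j = (if y ! j < length (vs ! j) \<and> x = vs ! j ! (y ! j) then Suc (y ! j) else y ! j)"
  by (simp add: next_state_def)

lemma length_next_state [simp]: "length (next_state vs x y) = length vs"
  by (simp add: next_state_def)

lemma state_of_Nil [simp]: "state_of vs [] = replicate (length vs) 0"
  by (simp add: state_of_def)

lemma state_of_snoc [simp]: "state_of vs (p @ [x]) = next_state vs x (state_of vs p)"
  by (simp add: state_of_def)

lemma E_con_iff:
  assumes "length y' = length vs"
  shows "E_con vs x y y' \<longleftrightarrow> state_admits vs x y \<and> y' = next_state vs x y"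
proof -
  have "y' = next_state vs x y \<longleftrightarrow>
        (\<forall>j<length vs. y' ! j =
           (if y ! j < length (vs ! j) \<and> x = vs ! j ! (y ! j) then Suc (y ! j) else y ! j))"
    using assms by (simp add: list_eq_iff_nth_eq next_state_nth)
  then show ?thesis
    unfolding E_con_def state_admits_def by blast
qed

section \<open>States record the seen prefixes of the classes\<close>

definition records :: "'a list list \<Rightarrow> 'a list \<Rightarrow> nat list \<Rightarrow> bool" where
  "records vs p y \<longleftrightarrow> length y = length vs \<and>
     (\<forall>j<length vs. y ! j \<le> length (vs ! j) \<and>
        (\<forall>k<length (vs ! j). vs ! j ! k \<in> set p \<longleftrightarrow> k < y ! j))"

lemma records_Nil: "records vs [] (replicate (length vs) 0)"
  by (simp add: records_def)

lemma records_Ytuples: "records vs p y \<Longrightarrow> y \<in> Ytuples vs"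
  by (simp add: records_def Ytuples_def)

lemma state_admits_iff_allowed:
  assumes "records vs p y"
  shows "state_admits vs x y \<longleftrightarrow> allowed vs p x"
proof -
  have "(\<forall>k. Suc (y ! j) \<le> k \<and> k < length (vs ! j) \<longrightarrow> x \<noteq> vs ! j ! k) \<longleftrightarrow>
        (\<forall>k. Suc k < length (vs ! j) \<and> x = vs ! j ! Suc k \<longrightarrow> vs ! j ! k \<in> set p)"
    if j: "j < length vs" for j
  proof -
    have seen: "vs ! j ! k \<in> set p \<longleftrightarrow> k < y ! j" if "Suc k < length (vs ! j)" for k
      using assms j that unfolding records_def by auto
    show ?thesis
    proof
      assume "\<forall>k. Suc (y ! j) \<le> k \<and> k < length (vs ! j) \<longrightarrow> x \<noteq> vs ! j ! k"
      then show "\<forall>k. Suc k < length (vs ! j) \<and> x = vs ! j ! Suc k \<longrightarrow> vs ! j ! k \<in> set p"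
        using seen by (metis Suc_le_mono not_less)
    next
      assume "\<forall>k. Suc k < length (vs ! j) \<and> x = vs ! j ! Suc k \<longrightarrow> vs ! j ! k \<in> set p"
      then show "\<forall>k. Suc (y ! j) \<le> k \<and> k < length (vs ! j) \<longrightarrow> x \<noteq> vs ! j ! k"
        using seen by (metis Suc_le_D Suc_le_mono not_less)
    qed
  qed
  then show ?thesis
    unfolding state_admits_def allowed_def by auto
qed

text \<open>Reading an allowed value keeps the state recording: the counter of the class of x
  advances exactly when x is its next expected value, and x cannot be a later one.\<close>
lemma records_snoc:
  assumes D: "distinct (concat vs)" and rec: "records vs p y" and ok: "allowed vs p x"
  shows "records vs (p @ [x]) (next_state vs x y)"
  unfolding records_def
proof (intro conjI allI impI)
  show "length (next_state vs x y) = length vs" by simp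
  fix j assume j: "j < length vs"
  have dj: "distinct (vs ! j)" using distinct_class[OF D j] .
  have yj: "y ! j \<le> length (vs ! j)"
    and seen: "\<And>k. k < length (vs ! j) \<Longrightarrow> vs ! j ! k \<in> set p \<longleftrightarrow> k < y ! j"
    using rec j unfolding records_def by auto
  have no_skip: "x \<noteq> vs ! j ! k" if "Suc (y ! j) \<le> k" "k < length (vs ! j)" for k
    using state_admits_iff_allowed[OF rec, of x] ok j that unfolding state_admits_def by blast
  have step: "next_state vs x y ! j =
      (if y ! j < length (vs ! j) \<and> x = vs ! j ! (y ! j) then Suc (y ! j) else y ! j)"
    using j by (rule next_state_nth)
  show "next_state vs x y ! j \<le> length (vs ! j)" using step yj by auto
  fix k assume k: "k < length (vs ! j)"
  show "vs ! j ! k \<in> set (p @ [x]) \<longleftrightarrow> k < next_state vs x y ! j"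
  proof (cases "y ! j < length (vs ! j) \<and> x = vs ! j ! (y ! j)")
    case True
    have "vs ! j ! k = x \<longleftrightarrow> k = y ! j" using dj k True by (simp add: nth_eq_iff_index_eq)
    then show ?thesis using True step seen[OF k] by auto
  next
    case no_advance: False
    have "x \<noteq> vs ! j ! k \<or> k < y ! j"
    proof (cases "k < y ! j")
      case False
      then have "k = y ! j \<or> Suc (y ! j) \<le> k" by auto
      then show ?thesis using no_skip[of k] k no_advance by auto
    qed simp
    then show ?thesis using no_advance step seen[OF k] by auto
  qed
qed

lemma state_of_records:
  assumes D: "distinct (concat vs)"
  shows "precedence vs p \<Longrightarrow> records vs p (state_of vs p)"
proof (induction p rule: rev_induct)
  case Nil
  show ?case by (simp add: records_Nil)
next
  case (snoc x p)
  then show ?case using records_snoc[OF D] by (simp add: precedence_snoc[OF D])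
qed

lemma precedence_iff_admits:
  assumes D: "distinct (concat vs)"
  shows "precedence vs xs \<longleftrightarrow>
         (\<forall>i<length xs. state_admits vs (xs ! i) (state_of vs (take i xs)))"
proof (induction xs rule: rev_induct)
  case Nil
  show ?case by (simp add: precedence_Nil[OF D])
next
  case (snoc x p)
  have split: "(\<forall>i<length (p @ [x]). state_admits vs ((p @ [x]) ! i) (state_of vs (take i (p @ [x])))) \<longleftrightarrow>
        (\<forall>i<length p. state_admits vs (p ! i) (state_of vs (take i p))) \<and>
        state_admits vs x (state_of vs p)"
    by (auto simp: less_Suc_eq nth_append)
  show ?case
  proof (cases "precedence vs p")
    case True
    have "allowed vs p x \<longleftrightarrow> state_admits vs x (state_of vs p)"
      using state_admits_iff_allowed[OF state_of_records[OF D True]] by simp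
    then show ?thesis using True snoc.IH split by (simp add: precedence_snoc[OF D])
  next
    case False
    then show ?thesis using snoc.IH split by (auto simp: precedence_snoc[OF D])
  qed
qed

section \<open>Part (a): Precedence equals the E-decomposition\<close>

definition state_run :: "'a list list \<Rightarrow> 'a list \<Rightarrow> nat list list" where
  "state_run vs xs = map (\<lambda>i. state_of vs (take i xs)) [0..<Suc (length xs)]"

lemma state_run_nth:
  "i \<le> length xs \<Longrightarrow> state_run vs xs ! i = state_of vs (take i xs)"
  unfolding state_run_def by (simp add: nth_map_upt less_Suc_eq_le del: upt_Suc)

lemma precedence_iff_E_run:
  assumes D: "distinct (concat vs)" and len: "length xs = n"
  shows "precedence vs xs \<longleftrightarrow>
         (\<exists>ys. length ys = Suc n \<and> set ys \<subseteq> Ytuples vs \<and>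
               ys ! 0 = replicate (length vs) 0 \<and>
               (\<forall>i < n. E_con vs (xs ! i) (ys ! i) (ys ! Suc i)))"
proof
  assume P: "precedence vs xs"
  have in_Ytuples: "state_of vs (take i xs) \<in> Ytuples vs" for i
    using records_Ytuples[OF state_of_records[OF D precedence_take[OF D P]]] .
  have E: "E_con vs (xs ! i) (state_of vs (take i xs)) (state_of vs (take (Suc i) xs))"
    if i: "i < n" for i
  proof -
    have "state_of vs (take (Suc i) xs) = next_state vs (xs ! i) (state_of vs (take i xs))"
      using i len by (simp add: take_Suc_conv_app_nth)
    moreover have "state_admits vs (xs ! i) (state_of vs (take i xs))"
      using P i len by (simp add: precedence_iff_admits[OF D])
    ultimately show ?thesis by (simp add: E_con_iff)
  qed
  show "\<exists>ys. length ys = Suc n \<and> set ys \<subseteq> Ytuples vs \<and>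
             ys ! 0 = replicate (length vs) 0 \<and>
             (\<forall>i < n. E_con vs (xs ! i) (ys ! i) (ys ! Suc i))"
  proof (intro exI[of _ "state_run vs xs"] conjI allI impI)
    show "length (state_run vs xs) = Suc n" using len by (simp add: state_run_def)
    show "set (state_run vs xs) \<subseteq> Ytuples vs"
      using in_Ytuples by (auto simp: state_run_def simp del: upt_Suc)
    show "state_run vs xs ! 0 = replicate (length vs) 0" by (simp add: state_run_nth)
    fix i assume "i < n"
    then show "E_con vs (xs ! i) (state_run vs xs ! i) (state_run vs xs ! Suc i)"
      using E len by (simp add: state_run_nth)
  qed
next
  assume "\<exists>ys. length ys = Suc n \<and> set ys \<subseteq> Ytuples vs \<and>
              ys ! 0 = replicate (length vs) 0 \<and>
              (\<forall>i < n. E_con vs (xs ! i) (ys ! i) (ys ! Suc i))"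
  then obtain ys where ly: "length ys = Suc n" and sy: "set ys \<subseteq> Ytuples vs"
    and y0: "ys ! 0 = replicate (length vs) 0"
    and E: "\<forall>i < n. E_con vs (xs ! i) (ys ! i) (ys ! Suc i)" by blast
  have step: "state_admits vs (xs ! i) (ys ! i) \<and> ys ! Suc i = next_state vs (xs ! i) (ys ! i)"
    if "i < n" for i
  proof -
    have "ys ! Suc i \<in> Ytuples vs" using sy ly that by (simp add: subset_iff)
    then have "length (ys ! Suc i) = length vs" by (simp add: Ytuples_def)
    then have "E_con vs (xs ! i) (ys ! i) (ys ! Suc i) \<longleftrightarrow>
        state_admits vs (xs ! i) (ys ! i) \<and> ys ! Suc i = next_state vs (xs ! i) (ys ! i)"
      by (rule E_con_iff)
    then show ?thesis using E that by blast
  qed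
  have run: "ys ! i = state_of vs (take i xs)" if "i \<le> n" for i
    using that
  proof (induction i)
    case 0
    show ?case using y0 by simp
  next
    case (Suc i)
    then have "i < n" by simp
    then show ?case
      using step[of i] Suc.IH len by (simp add: take_Suc_conv_app_nth)
  qed
  have "state_admits vs (xs ! i) (state_of vs (take i xs))" if "i < length xs" for i
    using step[of i] run[of i] that len by simp
  then show "precedence vs xs" by (simp add: precedence_iff_admits[OF D])
qed

section \<open>Part (b): a chain of GAC constraints is backtrack-free\<close>

definition support_path ::
    "('x \<Rightarrow> 'y \<Rightarrow> 'y \<Rightarrow> bool) \<Rightarrow> (nat \<Rightarrow> 'x set) \<Rightarrow> (nat \<Rightarrow> 'y set) \<Rightarrow>
     (nat \<Rightarrow> 'x) \<Rightarrow> (nat \<Rightarrow> 'y) \<Rightarrow> nat \<Rightarrow> nat \<Rightarrow> bool" where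
  "support_path C DX DY X Y a b \<longleftrightarrow>
     (\<forall>l. a \<le> l \<and> l \<le> b \<longrightarrow> Y l \<in> DY l) \<and>
     (\<forall>l. a \<le> l \<and> l < b \<longrightarrow> X l \<in> DX l \<and> C (X l) (Y l) (Y (Suc l)))"

lemma support_path_append:
  assumes "support_path C DX DY X1 Y1 a i" "support_path C DX DY X2 Y2 i b" "Y1 i = Y2 i"
  shows "support_path C DX DY (\<lambda>l. if l < i then X1 l else X2 l)
                               (\<lambda>l. if l \<le> i then Y1 l else Y2 l) a b"
proof -
  have join: "C (X2 i) (Y1 i) (Y2 (Suc i))" if "a \<le> i" "i < b"
    using assms that unfolding support_path_def by simp
  show ?thesis
    using assms join unfolding support_path_def
    by (auto simp: not_le Suc_le_eq dest: le_antisym)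
qed

lemma support_path_step:
  assumes "x \<in> DX i" "y \<in> DY i" "z \<in> DY (Suc i)" "C x y z"
  shows "support_path C DX DY (\<lambda>_. x) (\<lambda>l. if l = i then y else z) i (Suc i)"
  using assms unfolding support_path_def by (auto dest: le_antisym simp: less_Suc_eq_le)

lemma support_path_backward:
  assumes G: "\<forall>l<n. GAC3 C (DX l) (DY l) (DY (Suc l))"
  shows "i \<le> n \<Longrightarrow> y \<in> DY i \<Longrightarrow> \<exists>X Y. Y i = y \<and> support_path C DX DY X Y 0 i"
proof (induction i arbitrary: y)
  case 0
  then show ?case
    by (intro exI[of _ "\<lambda>_. undefined"] exI[of _ "\<lambda>_. y"]) (auto simp: support_path_def)
next
  case (Suc i)
  obtain x z where "x \<in> DX i" "z \<in> DY i" "C x z y"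
    using G Suc.prems unfolding GAC3_def by (meson Suc_le_lessD)
  then have step: "support_path C DX DY (\<lambda>_. x) (\<lambda>l. if l = i then z else y) i (Suc i)"
    using Suc.prems by (intro support_path_step)
  obtain X Y where "Y i = z" and path: "support_path C DX DY X Y 0 i"
    using Suc.IH[of z] Suc.prems \<open>z \<in> DY i\<close> by auto
  have "support_path C DX DY (\<lambda>l. if l < i then X l else x)
          (\<lambda>l. if l \<le> i then Y l else if l = i then z else y) 0 (Suc i)"
    by (rule support_path_append[OF path step]) (simp add: \<open>Y i = z\<close>)
  then show ?case by (intro exI conjI[rotated]) (assumption, simp)
qed

lemma support_path_forward:
  assumes G: "\<forall>l<n. GAC3 C (DX l) (DY l) (DY (Suc l))"
  shows "i \<le> n \<Longrightarrow> y \<in> DY i \<Longrightarrow> \<exists>X Y. Y i = y \<and> support_path C DX DY X Y i n"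
proof (induction "n - i" arbitrary: i y)
  case 0
  then show ?case
    by (intro exI[of _ "\<lambda>_. undefined"] exI[of _ "\<lambda>_. y"]) (auto simp: support_path_def)
next
  case (Suc d)
  then have i: "i < n" by simp
  obtain x z where "x \<in> DX i" "z \<in> DY (Suc i)" "C x y z"
    using G i Suc.prems unfolding GAC3_def by blast
  then have step: "support_path C DX DY (\<lambda>_. x) (\<lambda>l. if l = i then y else z) i (Suc i)"
    using Suc.prems by (intro support_path_step)
  have "d = n - Suc i" using Suc.hyps(2) by arith
  then obtain X Y where "Y (Suc i) = z" and path: "support_path C DX DY X Y (Suc i) n"
    using Suc.hyps(1)[of "Suc i" z] i \<open>z \<in> DY (Suc i)\<close> by auto
  have "support_path C DX DY (\<lambda>l. if l < Suc i then x else X l)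
          (\<lambda>l. if l \<le> Suc i then if l = i then y else z else Y l) i n"
    by (rule support_path_append[OF step path]) (simp add: \<open>Y (Suc i) = z\<close>)
  then show ?case by (intro exI conjI[rotated]) (assumption, simp)
qed

lemma support_path_through:
  assumes G: "\<forall>l<n. GAC3 C (DX l) (DY l) (DY (Suc l))" and i: "i < n" and d: "d \<in> DX i"
  shows "\<exists>X Y. X i = d \<and> support_path C DX DY X Y 0 n"
proof -
  obtain y z where y: "y \<in> DY i" and z: "z \<in> DY (Suc i)" and supp: "C d y z"
    using G i d unfolding GAC3_def by blast
  obtain X1 Y1 where P1: "Y1 i = y" "support_path C DX DY X1 Y1 0 i"
    using support_path_backward[OF G, of i y] i y by auto
  obtain X2 Y2 where P2: "Y2 (Suc i) = z" "support_path C DX DY X2 Y2 (Suc i) n"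
    using support_path_forward[OF G, of "Suc i" z] i z by auto
  have "support_path C DX DY (\<lambda>l. if l < i then X1 l else d)
          (\<lambda>l. if l \<le> i then Y1 l else if l = i then y else z) 0 (Suc i)"
    by (rule support_path_append[OF P1(2) support_path_step[of d DX i y DY z C, OF d y z supp]])
      (simp add: P1(1))
  then have "support_path C DX DY (\<lambda>l. if l < Suc i then if l < i then X1 l else d else X2 l)
          (\<lambda>l. if l \<le> Suc i then if l \<le> i then Y1 l else if l = i then y else z else Y2 l) 0 n"
    by (rule support_path_append[OF _ P2(2)]) (simp add: P2(1))
  then show ?thesis by (intro exI conjI[rotated]) (assumption, simp)
qed

lemma precedence_of_support_path:
  assumes D: "distinct (concat vs)"
    and P: "support_path (E_con vs) DX DY X Y 0 n"
    and DY: "\<forall>i \<le> n. DY i \<subseteq> Ytuples vs" and DY0: "DY 0 = {replicate (length vs) 0}"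
  shows "precedence vs (map X [0..<n])"
proof -
  have "Y l \<in> Ytuples vs" if "l \<le> n" for l
    using P DY that unfolding support_path_def by blast
  then have "set (map Y [0..<Suc n]) \<subseteq> Ytuples vs"
    by (auto simp del: upt_Suc)
  moreover have "Y 0 = replicate (length vs) 0"
    using P DY0 unfolding support_path_def by auto
  ultimately have "\<exists>ys. length ys = Suc n \<and> set ys \<subseteq> Ytuples vs \<and>
      ys ! 0 = replicate (length vs) 0 \<and>
      (\<forall>i < n. E_con vs (map X [0..<n] ! i) (ys ! i) (ys ! Suc i))"
    using P unfolding support_path_def
    by (intro exI[of _ "map Y [0..<Suc n]"]) (auto simp del: upt_Suc)
  then show ?thesis
    using precedence_iff_E_run[OF D, of "map X [0..<n]" n] by simp
qed

theorem mainTheorem9: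
  fixes vs :: "'a list list" and n :: nat
  assumes "distinct (concat vs)"
  shows "(\<forall>xs. length xs = n \<longrightarrow>
            (precedence vs xs \<longleftrightarrow>
              (\<exists>ys. length ys = Suc n \<and> set ys \<subseteq> Ytuples vs \<and>
                    ys ! 0 = replicate (length vs) 0 \<and>
                    (\<forall>i < n. E_con vs (xs ! i) (ys ! i) (ys ! Suc i)))))
       \<and> (\<forall>(DX :: nat \<Rightarrow> 'a set) (DY :: nat \<Rightarrow> nat list set).
            (\<forall>i < n. finite (DX i) \<and> DX i \<noteq> {}) \<longrightarrow>
            (\<forall>i \<le> n. DY i \<noteq> {} \<and> DY i \<subseteq> Ytuples vs) \<longrightarrow>
            DY 0 = {replicate (length vs) 0} \<longrightarrow>
            (\<forall>i < n. GAC3 (E_con vs) (DX i) (DY i) (DY (Suc i))) \<longrightarrow>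
            GAC (precedence vs) (map DX [0..<n]))"
proof (intro conjI allI impI)
  fix xs :: "'a list"
  assume "length xs = n"
  then show "precedence vs xs \<longleftrightarrow>
              (\<exists>ys. length ys = Suc n \<and> set ys \<subseteq> Ytuples vs \<and>
                    ys ! 0 = replicate (length vs) 0 \<and>
                    (\<forall>i < n. E_con vs (xs ! i) (ys ! i) (ys ! Suc i)))"
    by (rule precedence_iff_E_run[OF assms])
next
  fix DX :: "nat \<Rightarrow> 'a set" and DY :: "nat \<Rightarrow> nat list set"
  assume DY: "\<forall>i \<le> n. DY i \<noteq> {} \<and> DY i \<subseteq> Ytuples vs"
    and DY0: "DY 0 = {replicate (length vs) 0}"
    and G: "\<forall>i < n. GAC3 (E_con vs) (DX i) (DY i) (DY (Suc i))"
  show "GAC (precedence vs) (map DX [0..<n])"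
    unfolding GAC_def
  proof (intro allI impI ballI)
    fix i d
    assume "i < length (map DX [0..<n])" "d \<in> map DX [0..<n] ! i"
    then have i: "i < n" and d: "d \<in> DX i" by auto
    obtain X Y where "X i = d" and P: "support_path (E_con vs) DX DY X Y 0 n"
      using support_path_through[OF G i d] by blast
    moreover have "precedence vs (map X [0..<n])"
      using precedence_of_support_path[OF assms P] DY DY0 by blast
    ultimately show "\<exists>t. length t = length (map DX [0..<n]) \<and>
        (\<forall>k < length (map DX [0..<n]). t ! k \<in> map DX [0..<n] ! k) \<and> t ! i = d \<and> precedence vs t"
      using i P unfolding support_path_def by (intro exI[of _ "map X [0..<n]"]) auto
  qed
qed

end
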